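(* Let $k\geq 3$ be an integer. Every strongly connected tournament on $2k-1$ vertices contains a subdivision of $B(k,1;1)$.
   Context: A tournament is an orientation of a complete graph. A digraph is strongly connected if every vertex can reach every other vertex by a directed path. For positive integers $k_1,k_2,k_3$, a digraph $D$ contains a subdivision of $B(k_1,k_2;k_3)$ if there exist distinct vertices $x,y$ of $D$ and three pairwise internally vertex-disjoint directed paths in $D$: two from $x$ to $y$, of lengths (numbers of arcs) at least $k_1$ and at least $k_2$ respectively, and one from $y$ to $x$ of length at least $k_3$. *)

theory Defs
  imports Main
begin

definition tournament :: "'a set \<Rightarrow> ('a \<times> 'a) set \<Rightarrow> bool" where
  "tournament V A \<longleftrightarrow> A \<subseteq> V \<times> V \<and> (\<forall>v. (v, v) \<notin> A) \<and>
     (\<forall>u\<in>V. \<forall>v\<in>V. u \<noteq> v \<longrightarrow> ((u, v) \<in> A \<longleftrightarrow> (v, u) \<notin> A))"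

definition strongly_connected :: "'a set \<Rightarrow> ('a \<times> 'a) set \<Rightarrow> bool" where
  "strongly_connected V A \<longleftrightarrow> (\<forall>u\<in>V. \<forall>v\<in>V. (u, v) \<in> (A \<inter> V \<times> V)\<^sup>*)"

text \<open>A directed path as a list of distinct vertices, consecutive ones joined by arcs;
  its length is the number of arcs, i.e. length p - 1.\<close>
definition dpath :: "('a \<times> 'a) set \<Rightarrow> 'a list \<Rightarrow> bool" where
  "dpath A p \<longleftrightarrow> 2 \<le> length p \<and> distinct p \<and> (\<forall>i. Suc i < length p \<longrightarrow> (p ! i, p ! Suc i) \<in> A)"

definition interior :: "'a list \<Rightarrow> 'a set" where
  "interior p = set (butlast (tl p))"

definition contains_subdivision_B :: "'a set \<Rightarrow> ('a \<times> 'a) set \<Rightarrow> nat \<Rightarrow> nat \<Rightarrow> nat \<Rightarrow> bool" where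
  "contains_subdivision_B V A k1 k2 k3 \<longleftrightarrow>
     (\<exists>x\<in>V. \<exists>y\<in>V. \<exists>P1 P2 P3. x \<noteq> y \<and>
        dpath A P1 \<and> hd P1 = x \<and> last P1 = y \<and> k1 \<le> length P1 - 1 \<and>
        dpath A P2 \<and> hd P2 = x \<and> last P2 = y \<and> k2 \<le> length P2 - 1 \<and>
        dpath A P3 \<and> hd P3 = y \<and> last P3 = x \<and> k3 \<le> length P3 - 1 \<and>
        set P1 \<subseteq> V \<and> set P2 \<subseteq> V \<and> set P3 \<subseteq> V \<and>
        interior P1 \<inter> interior P2 = {} \<and> interior P1 \<inter> interior P3 = {} \<and>
        interior P2 \<inter> interior P3 = {})"

end

theory Submission
  imports Defs
begin

text \<open>By Camion's theorem the tournament has a Hamiltonian cycle \<open>v 0, \<dots>, v (n - 1)\<close>,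
  where \<open>n = 2k - 1\<close> and indices are read modulo \<open>n\<close>. If some chord points backwards,
  \<open>v (i + 2) \<rightarrow> v i\<close>, it is one path from \<open>v (i + 2)\<close> to \<open>v i\<close>, the rest of the cycle is
  another one of length \<open>n - 2 \<ge> k\<close>, and \<open>v i \<rightarrow> v (i + 1) \<rightarrow> v (i + 2)\<close> leads back.
  Otherwise every chord \<open>v i \<rightarrow> v (i + 2)\<close> points forwards. As \<open>n\<close> is odd, \<open>v (2k) = v 1\<close> and
  \<open>v (2k - 1) = v 0\<close>, so the chords form a path \<open>v 0 \<rightarrow> v 2 \<rightarrow> \<dots> \<rightarrow> v 1\<close> of length \<open>k\<close> and a path
  \<open>v 1 \<rightarrow> v 3 \<rightarrow> \<dots> \<rightarrow> v 0\<close> back, while the arc \<open>v 0 \<rightarrow> v 1\<close> is the short path.\<close>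

lemma tournament_arcD: "tournament V A \<Longrightarrow> (u, v) \<in> A \<Longrightarrow> u \<in> V \<and> v \<in> V \<and> u \<noteq> v"
  unfolding tournament_def by blast

lemma tournament_asym: "tournament V A \<Longrightarrow> (u, v) \<in> A \<Longrightarrow> (v, u) \<notin> A"
  using tournament_arcD[of V A u v] unfolding tournament_def by blast

lemma tournament_reverse_arc:
  "tournament V A \<Longrightarrow> u \<in> V \<Longrightarrow> v \<in> V \<Longrightarrow> u \<noteq> v \<Longrightarrow> (u, v) \<notin> A \<Longrightarrow> (v, u) \<in> A"
  unfolding tournament_def by blast

lemma rtrancl_leaves_set:
  assumes "(a, b) \<in> R\<^sup>*" "a \<in> S" "b \<notin> S"
  obtains s t where "(s, t) \<in> R" "s \<in> S" "t \<notin> S"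
  using assms by (induction rule: rtrancl_induct) auto

lemma nat_exists_true_false_step:
  fixes P :: "nat \<Rightarrow> bool"
  assumes "P a" "\<not> P b" "a \<le> b"
  shows "\<exists>i. a \<le> i \<and> i < b \<and> P i \<and> \<not> P (Suc i)"
  using assms
proof (induction b)
  case (Suc b)
  have "a \<le> b"
    using Suc.prems by (metis le_SucE)
  then show ?case
    using Suc by (cases "P b") (auto intro: less_SucI)
qed simp

lemma mod_exists_true_false_step:
  fixes P :: "nat \<Rightarrow> bool"
  assumes "P a" "\<not> P b" "a < n" "b < n"
  shows "\<exists>i<n. P i \<and> \<not> P (Suc i mod n)"
proof -
  have "P (a mod n)" "\<not> P ((b + n) mod n)" "a \<le> b + n"
    using assms by auto
  then obtain m where "P (m mod n)" "\<not> P (Suc m mod n)"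
    using nat_exists_true_false_step[of "\<lambda>m. P (m mod n)"] by blast
  then show ?thesis
    using assms(3) by (intro exI[of _ "m mod n"]) (auto simp: mod_Suc_eq)
qed

text \<open>A single vertex counts as a cycle, so that cycles can be grown from one vertex.\<close>

definition dcycle :: "('a \<times> 'a) set \<Rightarrow> 'a list \<Rightarrow> bool" where
  "dcycle A c \<longleftrightarrow> distinct c \<and> c \<noteq> [] \<and> successively (\<lambda>x y. (x, y) \<in> A) c \<and>
     (2 \<le> length c \<longrightarrow> (last c, hd c) \<in> A)"

lemma dcycle_arc:
  assumes "dcycle A c" "2 \<le> length c" "i < length c"
  shows "(c ! i, c ! (Suc i mod length c)) \<in> A"
proof (cases "Suc i < length c")
  case True
  then show ?thesis
    using assms successively_nth[of "\<lambda>x y. (x, y) \<in> A" c i] by (simp add: dcycle_def)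
next
  case False
  then have "Suc i = length c"
    using assms(3) by simp
  then have "i = length c - 1" "Suc i mod length c = 0" "c \<noteq> []"
    by auto
  then have "c ! i = last c" "c ! (Suc i mod length c) = hd c"
    by (simp_all add: last_conv_nth hd_conv_nth)
  then show ?thesis
    using assms by (simp add: dcycle_def)
qed

lemma dcycle_insert:
  assumes c: "dcycle A c" and v: "v \<notin> set c" and i: "i < length c"
    and arcs: "(c ! i, v) \<in> A" "(v, c ! (Suc i mod length c)) \<in> A"
  shows "dcycle A (take (Suc i) c @ v # drop (Suc i) c)"
proof -
  let ?arc = "\<lambda>x y. (x, y) \<in> A"
  let ?c' = "take (Suc i) c @ v # drop (Suc i) c"
  have succ: "successively ?arc (take (Suc i) c)" "successively ?arc (drop (Suc i) c)"
    using c successively_append_iff[of ?arc "take (Suc i) c" "drop (Suc i) c"]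
    by (auto simp: dcycle_def)
  have last_take: "last (take (Suc i) c) = c ! i"
    using i by (simp add: take_Suc_conv_app_nth)
  have "successively ?arc (v # drop (Suc i) c)"
    using succ arcs(2) by (cases "Suc i < length c") (auto simp: successively_Cons hd_drop_conv_nth)
  then have "successively ?arc ?c'"
    using succ last_take arcs(1) by (simp add: successively_append_iff)
  moreover have "distinct ?c'"
    using c v set_take_disj_set_drop_if_distinct[of c "Suc i" "Suc i"]
    by (auto simp: dcycle_def dest: in_set_takeD in_set_dropD)
  moreover have "(last ?c', hd ?c') \<in> A"
  proof (cases "Suc i < length c")
    case True
    then have "last ?c' = last c" "hd ?c' = hd c"
      by (auto simp: last_drop hd_append)
    then show ?thesis
      using c True by (simp add: dcycle_def)
  next
    case False
    then have "Suc i = length c"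
      using i by simp
    then have "?c' = c @ [v]" "Suc i mod length c = 0" "c \<noteq> []"
      by auto
    then have "last ?c' = v" "hd ?c' = c ! (Suc i mod length c)"
      by (simp_all add: hd_conv_nth nth_append)
    then show ?thesis
      using arcs(2) by simp
  qed
  ultimately show ?thesis
    by (simp add: dcycle_def)
qed

lemma dcycle_length: "dcycle A c \<Longrightarrow> length c = card (set c)"
  by (simp add: dcycle_def distinct_card)

lemma tournament_dcycle_insert_vertex:
  assumes T: "tournament V A" and c: "dcycle A c" "set c \<subseteq> V" and v: "v \<in> V" "v \<notin> set c"
    and in_arc: "a \<in> set c" "(a, v) \<in> A" and out_arc: "b \<in> set c" "(v, b) \<in> A"
  obtains c' where "dcycle A c'" "set c' = insert v (set c)"
proof -
  let ?n = "length c"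
  obtain j j' where j: "j < ?n" "(c ! j, v) \<in> A" and j': "j' < ?n" "(c ! j', v) \<notin> A"
    using in_arc out_arc tournament_asym[OF T] by (metis in_set_conv_nth)
  obtain i where i: "i < ?n" "(c ! i, v) \<in> A" "(c ! (Suc i mod ?n), v) \<notin> A"
    using mod_exists_true_false_step[of "\<lambda>i. (c ! i, v) \<in> A", OF j(2) j'(2) j(1) j'(1)] by blast
  have "Suc i mod ?n < ?n"
    using i(1) mod_less_divisor[of ?n "Suc i"] by linarith
  then have "c ! (Suc i mod ?n) \<in> set c"
    by (rule nth_mem)
  then have "(v, c ! (Suc i mod ?n)) \<in> A"
    using tournament_reverse_arc[OF T] i(3) c(2) v by blast
  then have "dcycle A (take (Suc i) c @ v # drop (Suc i) c)"
    using dcycle_insert[OF c(1) v(2) i(1,2)] by blast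
  moreover have "set (take (Suc i) c @ v # drop (Suc i) c) = insert v (set c)"
    using set_append[of "take (Suc i) c" "drop (Suc i) c"] by simp
  ultimately show thesis
    using that by blast
qed

lemma dcycle_detour:
  assumes c: "dcycle A (c0 # t)" and new: "u \<notin> set (c0 # t)" "w \<notin> set (c0 # t)" "u \<noteq> w"
    and arcs: "(c0, u) \<in> A" "(u, w) \<in> A" "\<forall>a\<in>set (c0 # t). (w, a) \<in> A"
  shows "dcycle A (c0 # u # w # tl t)"
proof (cases t)
  case Nil
  then show ?thesis
    using new arcs by (simp add: dcycle_def)
next
  case (Cons t1 t')
  then have "successively (\<lambda>x y. (x, y) \<in> A) t'" "t' \<noteq> [] \<Longrightarrow> (last t', c0) \<in> A"
    using c by (auto simp: dcycle_def successively_Cons)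
  then show ?thesis
    using Cons c new arcs by (auto simp: dcycle_def successively_Cons)
qed

lemma strongly_connected_tournament_detour_pair:
  assumes T: "tournament V A" and S: "strongly_connected V A"
    and C: "C \<subseteq> V" "c0 \<in> C" and v: "v \<in> V - C"
    and split: "\<forall>x\<in>V - C. (\<forall>a\<in>C. (a, x) \<in> A) \<or> (\<forall>a\<in>C. (x, a) \<in> A)"
  obtains u w where "u \<in> V - C" "w \<in> V - C" "\<forall>a\<in>C. (a, u) \<in> A" "(u, w) \<in> A"
    "\<forall>a\<in>C. (w, a) \<in> A"
proof -
  define Out where "Out = {x \<in> V - C. \<forall>a\<in>C. (a, x) \<in> A}"
  have "(c0, v) \<in> (A \<inter> V \<times> V)\<^sup>*"
    using S C v unfolding strongly_connected_def by blast
  then obtain s x where sx: "(s, x) \<in> A \<inter> V \<times> V" "s \<in> C" "x \<notin> C"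
    using C(2) v by (blast elim: rtrancl_leaves_set)
  then have "x \<in> Out"
    using split tournament_asym[OF T] unfolding Out_def by blast
  moreover have "(x, c0) \<in> (A \<inter> V \<times> V)\<^sup>*"
    using S C sx unfolding strongly_connected_def by blast
  moreover have "c0 \<notin> Out"
    using C(2) unfolding Out_def by blast
  ultimately obtain u w where uw: "(u, w) \<in> A \<inter> V \<times> V" "u \<in> Out" "w \<notin> Out"
    by (blast elim: rtrancl_leaves_set)
  have "w \<notin> C"
    using uw tournament_asym[OF T] unfolding Out_def by blast
  then show thesis
    using that uw split unfolding Out_def by blast
qed

text \<open>Either some outside vertex has both an in- and an out-neighbour on the cycle and can be
  inserted, or every outside vertex dominates or is dominated by the whole cycle; then strong
  connectivity yields an arc \<open>u \<rightarrow> w\<close> from a dominated to a dominating vertex, and the detour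
  \<open>c\<^sub>0 \<rightarrow> u \<rightarrow> w\<close> replaces the vertex after \<open>c\<^sub>0\<close>.\<close>

lemma strongly_connected_tournament_extend_dcycle:
  assumes T: "tournament V A" and S: "strongly_connected V A"
    and c: "dcycle A c" "set c \<subseteq> V" "set c \<noteq> V"
  obtains c' where "dcycle A c'" "set c' \<subseteq> V" "length c < length c'"
proof (cases "\<exists>v\<in>V - set c. \<exists>a\<in>set c. \<exists>b\<in>set c. (a, v) \<in> A \<and> (v, b) \<in> A")
  case True
  then obtain v a b where v: "v \<in> V" "v \<notin> set c"
    and "a \<in> set c" "(a, v) \<in> A" "b \<in> set c" "(v, b) \<in> A"
    by blast
  then obtain c' where c': "dcycle A c'" "set c' = insert v (set c)"
    using tournament_dcycle_insert_vertex[OF T c(1,2)] by blast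
  then have "length c' = Suc (length c)"
    using v(2) dcycle_length[OF c'(1)] dcycle_length[OF c(1)] by simp
  then show thesis
    using that c' c(2) v(1) by simp
next
  case False
  have split: "\<forall>x\<in>V - set c. (\<forall>a\<in>set c. (a, x) \<in> A) \<or> (\<forall>a\<in>set c. (x, a) \<in> A)"
  proof
    fix x
    assume x: "x \<in> V - set c"
    show "(\<forall>a\<in>set c. (a, x) \<in> A) \<or> (\<forall>a\<in>set c. (x, a) \<in> A)"
    proof (cases "\<exists>a\<in>set c. (a, x) \<in> A")
      case True
      then have "\<forall>b\<in>set c. (x, b) \<notin> A"
        using False x by blast
      then show ?thesis
        using tournament_reverse_arc[OF T] x c(2) by blast
    next
      case False
      then show ?thesis
        using tournament_reverse_arc[OF T] x c(2) by blast
    qed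
  qed
  obtain c0 t where ct: "c = c0 # t"
    using c(1) by (cases c) (auto simp: dcycle_def)
  have "c0 \<in> set c"
    using ct by simp
  moreover obtain v where "v \<in> V - set c"
    using c(2,3) by blast
  ultimately obtain u w where u: "u \<in> V - set c" "\<forall>a\<in>set c. (a, u) \<in> A"
    and w: "w \<in> V - set c" "\<forall>a\<in>set c. (w, a) \<in> A" and uw: "(u, w) \<in> A"
    using strongly_connected_tournament_detour_pair[OF T S c(2) _ _ split] by metis
  have "dcycle A (c0 # u # w # tl t)"
    using dcycle_detour[of A c0 t u w] c(1) ct u w uw tournament_arcD[OF T uw] by simp
  moreover have "set (c0 # u # w # tl t) \<subseteq> V"
    using c(2) ct u w by (cases t) auto
  ultimately show thesis
    using that ct by simp
qed

theorem strongly_connected_tournament_hamiltonian: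
  assumes T: "tournament V A" and S: "strongly_connected V A" and V: "finite V" "V \<noteq> {}"
  obtains c where "dcycle A c" "set c = V"
proof -
  let ?P = "\<lambda>c. dcycle A c \<and> set c \<subseteq> V"
  obtain v where "v \<in> V"
    using V(2) by blast
  then have "?P [v]"
    by (simp add: dcycle_def)
  moreover have "length c < Suc (card V)" if "?P c" for c
    using that dcycle_length card_mono[OF V(1)] by (metis less_Suc_eq_le)
  ultimately obtain c where c: "?P c" and max: "\<And>c'. ?P c' \<Longrightarrow> length c' \<le> length c"
    using ex_has_greatest_nat[of ?P "[v]" length "Suc (card V)"] by blast
  have "set c = V"
  proof (rule ccontr)
    assume "set c \<noteq> V"
    then obtain c' where "?P c'" "length c < length c'"
      using strongly_connected_tournament_extend_dcycle[OF T S] c by blast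
    then show False
      using max by (simp add: leD)
  qed
  then show thesis
    using that c by blast
qed

lemma mod_eq_imp_eq_nat:
  fixes i j n :: nat
  assumes "i mod n = j mod n" "a \<le> i" "a \<le> j" "i < a + n" "j < a + n"
  shows "i = j"
proof -
  have "i' = j'" if "i' mod n = j' mod n" "a \<le> i'" "i' \<le> j'" "j' < a + n" for i' j' :: nat
  proof -
    have "j' mod n = i' mod n"
      using that(1) by simp
    then have "n dvd j' - i'"
      using mod_eq_dvd_iff_nat that(3) by blast
    then show ?thesis
      using that nat_dvd_not_less[of "j' - i'" n] by (cases "i' < j'") auto
  qed
  from this[of i j] this[of j i] show ?thesis
    using assms by (cases "i \<le> j") auto
qed

lemma odd_mod_double_cancel:
  fixes a b n r :: nat
  assumes "odd n" "(2 * a + r) mod n = (2 * b + r) mod n" "a < n" "b < n"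
  shows "a = b"
proof -
  have "a' = b'" if "(2 * a' + r) mod n = (2 * b' + r) mod n" "a' \<le> b'" "b' < n" for a' b' :: nat
  proof -
    have "n dvd 2 * (b' - a')"
      using that mod_eq_dvd_iff_nat[of "2 * a' + r" "2 * b' + r" n] by (simp add: right_diff_distrib')
    then have "n dvd b' - a'"
      using assms(1) coprime_dvd_mult_right_iff[of n 2 "b' - a'"] by simp
    then show ?thesis
      using that nat_dvd_not_less[of "b' - a'" n] by (cases "a' < b'") auto
  qed
  from this[of a b] this[of b a] show ?thesis
    using assms by (cases "a \<le> b") auto
qed

lemma dpath_pair: "dpath A [x, y] \<longleftrightarrow> x \<noteq> y \<and> (x, y) \<in> A"
  by (auto simp: dpath_def less_Suc_eq)

lemma dpath_map_upt:
  assumes "a + 2 \<le> b" "inj_on g {a..<b}" "\<And>j. a \<le> j \<Longrightarrow> Suc j < b \<Longrightarrow> (g j, g (Suc j)) \<in> A"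
  shows "dpath A (map g [a..<b])"
  unfolding dpath_def using assms by (auto simp: distinct_map)

lemma butlast_upt: "butlast [m..<n] = [m..<n - 1]"
proof (cases "m < n")
  case True
  then have "[m..<n] = [m..<n - 1] @ [n - 1]"
    using upt_Suc_append[of m "n - 1"] by simp
  then show ?thesis
    by simp
qed simp

lemma interior_map_upt: "interior (map g [a..<b]) = g ` {Suc a..<b - 1}"
  unfolding interior_def by (simp add: map_butlast[symmetric] map_tl[symmetric] butlast_upt)

lemma contains_subdivision_BI:
  assumes "dpath A P1" "dpath A P2" "dpath A P3" "hd P1 \<noteq> last P1"
    and "hd P2 = hd P1" "last P2 = last P1" "hd P3 = last P1" "last P3 = hd P1"
    and "k1 \<le> length P1 - 1" "k2 \<le> length P2 - 1" "k3 \<le> length P3 - 1"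
    and "set P1 \<subseteq> V" "set P2 \<subseteq> V" "set P3 \<subseteq> V"
    and "interior P1 \<inter> interior P2 = {}" "interior P1 \<inter> interior P3 = {}"
    "interior P2 \<inter> interior P3 = {}"
  shows "contains_subdivision_B V A k1 k2 k3"
  unfolding contains_subdivision_B_def
proof (rule bexI[of _ "hd P1"], rule bexI[of _ "last P1"],
    rule exI[of _ P1], rule exI[of _ P2], rule exI[of _ P3], intro conjI)
  have "P1 \<noteq> []"
    using assms(1) unfolding dpath_def by auto
  then show "hd P1 \<in> V" "last P1 \<in> V"
    using assms(12) hd_in_set last_in_set by blast+
qed (use assms in auto)

lemma contains_subdivision_B_mono:
  assumes "contains_subdivision_B V A k1 k2 k3" "l1 \<le> k1" "l2 \<le> k2" "l3 \<le> k3"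
  shows "contains_subdivision_B V A l1 l2 l3"
  using assms unfolding contains_subdivision_B_def by (meson order_trans)

locale cyclic_sequence =
  fixes A :: "('a \<times> 'a) set" and n :: nat and f :: "nat \<Rightarrow> 'a"
  assumes period_pos: "0 < n"
    and arc: "(f i, f (Suc i)) \<in> A"
    and eq_iff: "f i = f j \<longleftrightarrow> i mod n = j mod n"
begin

lemma periodic: "f (i + n) = f i"
  using eq_iff by simp

lemma inj_on_window:
  assumes "b \<le> a + n"
  shows "inj_on f {a..<b}"
proof (rule inj_onI)
  fix x y
  assume "x \<in> {a..<b}" "y \<in> {a..<b}" "f x = f y"
  then show "x = y"
    using assms mod_eq_imp_eq_nat[of x n y a] by (simp add: eq_iff)
qed

lemma dpath_window: "a + 2 \<le> b \<Longrightarrow> b \<le> a + n \<Longrightarrow> dpath A (map f [a..<b])"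
  by (rule dpath_map_upt) (auto simp: inj_on_window arc)

lemma chord_ends_distinct: "3 \<le> n \<Longrightarrow> f (i + 2) \<noteq> f i"
  using inj_on_window[of "i + 3" i] by (auto dest: inj_onD[of _ _ i "i + 2"])

lemma subdivision_B_of_backward_chord:
  assumes n: "3 \<le> n" and chord: "(f (i + 2), f i) \<in> A"
  shows "contains_subdivision_B (range f) A (n - 2) 1 2"
proof -
  define P1 where "P1 = map f [i + 2..<i + n + 1]"
  define P2 where "P2 = [f (i + 2), f i]"
  define P3 where "P3 = map f [i..<i + 3]"
  have paths: "dpath A P1" "dpath A P2" "dpath A P3"
    using n chord chord_ends_distinct dpath_window[of "i + 2" "i + n + 1"] dpath_window[of i "i + 3"]
    unfolding P1_def P2_def P3_def by (simp_all add: dpath_pair)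
  have "f (i + 1) \<notin> f ` {i + 3..<i + n}"
    using inj_on_image_mem_iff[OF inj_on_window[of "i + n + 1" "i + 1"], of "i + 1" "{i + 3..<i + n}"]
    using period_pos by simp
  then have "interior P1 \<inter> interior P3 = {}"
    unfolding P1_def P3_def interior_map_upt by (simp add: eval_nat_numeral)
  moreover have "hd P1 = f (i + 2)" "last P1 = f i" "length P1 = n - 1"
    "hd P3 = f i" "last P3 = f (i + 2)" "length P3 = 3"
    using n periodic[of i] unfolding P1_def P3_def by (auto simp: hd_map last_map)
  moreover have "set P1 \<subseteq> range f" "set P2 \<subseteq> range f" "set P3 \<subseteq> range f"
    unfolding P1_def P2_def P3_def by auto
  ultimately show ?thesis
    using paths n chord_ends_distinct[OF n, of i]
    by (intro contains_subdivision_BI[of A P1 P2 P3]) (simp_all add: P2_def interior_def)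
qed

lemma inj_on_double_step:
  assumes "odd n"
  shows "inj_on (\<lambda>j. f (2 * j + r)) {..<n}"
proof (rule inj_onI)
  fix a b
  assume "a \<in> {..<n}" "b \<in> {..<n}" "f (2 * a + r) = f (2 * b + r)"
  then show "a = b"
    using assms odd_mod_double_cancel[of n a r b] by (simp add: eq_iff)
qed

lemma subdivision_B_of_forward_chords:
  assumes n: "n = 2 * k - 1" and k: "2 \<le> k" and chords: "\<And>i. (f i, f (i + 2)) \<in> A"
  shows "contains_subdivision_B (range f) A k 1 (k - 1)"
proof -
  have "odd n"
    using n k by presburger
  define P1 where "P1 = map (\<lambda>j. f (2 * j)) [0..<k + 1]"
  define P2 where "P2 = [f 0, f 1]"
  define P3 where "P3 = map (\<lambda>j. f (2 * j + 1)) [0..<k]"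
  have "inj_on (\<lambda>j. f (2 * j + 0)) {0..<k + 1}"
    by (rule inj_on_subset[OF inj_on_double_step[OF \<open>odd n\<close>]]) (use n k in auto)
  then have "dpath A P1"
    unfolding P1_def using k chords by (intro dpath_map_upt) auto
  moreover have "inj_on (\<lambda>j. f (2 * j + 1)) {0..<k}"
    by (rule inj_on_subset[OF inj_on_double_step[OF \<open>odd n\<close>]]) (use n k in auto)
  then have "dpath A P3"
    unfolding P3_def using k chords by (intro dpath_map_upt) auto
  moreover have ends: "f 0 \<noteq> f 1"
    using n k by (simp add: eq_iff)
  then have "dpath A P2"
    unfolding P2_def using arc[of 0] by (simp add: dpath_pair)
  moreover have "f (2 * a) \<noteq> f (2 * b + 1)" if "a < k" "b < k - 1" for a b
  proof -
    have "2 * a \<noteq> 2 * b + 1"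
      by presburger
    then show ?thesis
      using that n by (simp add: eq_iff)
  qed
  then have "interior P1 \<inter> interior P3 = {}"
    unfolding P1_def P3_def interior_map_upt by auto
  moreover have "2 * k = 1 + n" "2 * (k - 1) + 1 = 0 + n"
    using n k by auto
  then have "f (2 * k) = f 1" "f (2 * (k - 1) + 1) = f 0"
    by (simp_all only: periodic)
  then have "hd P1 = f 0" "last P1 = f 1" "length P1 = k + 1"
    "hd P3 = f 1" "last P3 = f 0" "length P3 = k"
    using k unfolding P1_def P3_def by (simp_all add: hd_map last_map)
  moreover have "set P1 \<subseteq> range f" "set P2 \<subseteq> range f" "set P3 \<subseteq> range f"
    unfolding P1_def P2_def P3_def by auto
  ultimately show ?thesis
    using k ends by (intro contains_subdivision_BI[of A P1 P2 P3]) (simp_all add: P2_def interior_def)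
qed

end

lemma dcycle_cyclic_sequence:
  assumes c: "dcycle A c" "2 \<le> length c"
  shows "cyclic_sequence A (length c) (\<lambda>i. c ! (i mod length c))"
proof
  show "0 < length c"
    using c(2) by linarith
  show "(c ! (i mod length c), c ! (Suc i mod length c)) \<in> A" for i
  proof -
    have "i mod length c < length c"
      using c(2) mod_less_divisor[of "length c" i] by linarith
    from dcycle_arc[OF c this] show ?thesis
      by (simp only: mod_Suc_eq)
  qed
  show "c ! (i mod length c) = c ! (j mod length c) \<longleftrightarrow> i mod length c = j mod length c" for i j
    using c by (simp add: dcycle_def nth_eq_iff_index_eq)
qed

lemma range_nth_mod:
  assumes "c \<noteq> []"
  shows "range (\<lambda>i. c ! (i mod length c)) = set c"
proof
  show "range (\<lambda>i. c ! (i mod length c)) \<subseteq> set c"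
    using assms by (auto intro!: nth_mem)
  show "set c \<subseteq> range (\<lambda>i. c ! (i mod length c))"
  proof
    fix x
    assume "x \<in> set c"
    then obtain i where "i < length c" "x = c ! i"
      by (auto simp: in_set_conv_nth)
    then show "x \<in> range (\<lambda>i. c ! (i mod length c))"
      by (intro image_eqI[of _ _ i]) simp_all
  qed
qed

lemma strongly_connected_tournament_hamiltonian_sequence:
  assumes "tournament V A" "strongly_connected V A" "finite V" "2 \<le> card V"
  obtains f where "cyclic_sequence A (card V) f" "range f = V"
proof -
  have "V \<noteq> {}"
    using assms(4) by auto
  then obtain c where c: "dcycle A c" "set c = V"
    using strongly_connected_tournament_hamiltonian[OF assms(1-3)] by blast
  then have "length c = card V" "c \<noteq> []"
    using dcycle_length[OF c(1)] assms(4) by auto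
  then show thesis
    using that dcycle_cyclic_sequence[OF c(1)] range_nth_mod[of c] c(2) assms(4) by simp
qed

theorem mainTheorem6:
  fixes V :: "'a set" and A :: "('a \<times> 'a) set" and k :: nat
  assumes "k \<ge> 3" and "finite V" and "card V = 2 * k - 1"
    and "tournament V A" and "strongly_connected V A"
  shows "contains_subdivision_B V A k 1 1"
proof -
  let ?n = "2 * k - 1"
  have "2 \<le> card V"
    using assms(1,3) by simp
  then obtain f where f: "cyclic_sequence A ?n f" and V: "range f = V"
    using strongly_connected_tournament_hamiltonian_sequence[OF assms(4,5,2)]
    unfolding assms(3) by blast
  interpret cyclic_sequence A ?n f
    by (rule f)
  have n: "3 \<le> ?n"
    using assms(1) by simp
  show ?thesis
  proof (cases "\<exists>i. (f (i + 2), f i) \<in> A")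
    case True
    then have "contains_subdivision_B V A (?n - 2) 1 2"
      using subdivision_B_of_backward_chord[OF n] V by blast
    then show ?thesis
      by (rule contains_subdivision_B_mono) (use assms(1) in auto)
  next
    case False
    have "f i \<in> V" for i
      using V by auto
    then have "(f i, f (i + 2)) \<in> A" for i
      using False tournament_reverse_arc[OF assms(4)] chord_ends_distinct[OF n, of i] by blast
    then have "contains_subdivision_B V A k 1 (k - 1)"
      using subdivision_B_of_forward_chords[OF refl] assms(1) V by auto
    then show ?thesis
      by (rule contains_subdivision_B_mono) (use assms(1) in auto)
  qed
qed

end
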